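(* Let $A$ be a binary $n\times m$ matrix with $R_{\mathbb{R}}(A)=R_{binary}(A)$. If $x_1,\dots,x_t$ are binary column vectors of length $n$ such that $R_{binary}(A|x_i)=R_{binary}(A)$ for all $1\le i\le t$, then $R_{\mathbb{R}}(A|x_1,\dots,x_t)=R_{\mathbb{R}}(A)$.
   Context: $R_{\mathbb{R}}$ is the usual rank over the reals. $R_{binary}(M)$ for a binary $p\times q$ matrix $M$ is the least $k$ with $M=UV$, $U\in\{0,1\}^{p\times k}$, $V\in\{0,1\}^{k\times q}$, ordinary arithmetic. $(A|x_1,\dots,x_t)$ denotes $A$ with the columns $x_1,\dots,x_t$ appended on the right. *)

theory Defs
  imports "Jordan_Normal_Form.DL_Rank"
begin

definition binary_mat :: "real mat \<Rightarrow> bool" where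
  "binary_mat M \<longleftrightarrow> (\<forall>i < dim_row M. \<forall>j < dim_col M. M $$ (i,j) \<in> {0,1})"

definition binary_vec :: "real vec \<Rightarrow> bool" where
  "binary_vec v \<longleftrightarrow> (\<forall>i < dim_vec v. v $ i \<in> {0,1})"

definition real_rank :: "real mat \<Rightarrow> nat" where
  "real_rank M = vec_space.rank (dim_row M) M"

(* Binary rank: least k with M = U * V, U binary p x k, V binary k x q,
   ordinary real arithmetic. *)
definition binary_rank :: "real mat \<Rightarrow> nat" where
  "binary_rank M = (LEAST k. \<exists>U V. U \<in> carrier_mat (dim_row M) k \<and>
      V \<in> carrier_mat k (dim_col M) \<and> binary_mat U \<and> binary_mat V \<and> M = U * V)"

definition append_columns :: "real mat \<Rightarrow> real vec list \<Rightarrow> real mat" where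
  "append_columns A xs = mat_of_cols (dim_row A) (cols A @ xs)"

end

theory Submission
  imports Defs
begin

text \<open>Any binary factorisation \<open>M = U V\<close> with \<open>k\<close> inner columns puts the columns of \<open>M\<close> into
  the span of the \<open>k\<close> columns of \<open>U\<close>, so \<open>real_rank M \<le> binary_rank M\<close> for every binary \<open>M\<close>.
  Hence each \<open>(A|x\<^sub>i)\<close> has real rank at most \<open>binary_rank A = real_rank A\<close>, which forces \<open>x\<^sub>i\<close>
  into the column span of \<open>A\<close>; appending vectors of that span does not change the real rank.\<close>

context vec_space begin

lemma rank_le_if_cols_subset_span:
  assumes A: "A \<in> carrier_mat n a" and B: "B \<in> carrier_mat n b"
    and sub: "set (cols A) \<subseteq> span (set (cols B))"
  shows "rank A \<le> rank B"
proof -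
  have cA: "set (cols A) \<subseteq> carrier_vec n" and cB: "set (cols B) \<subseteq> carrier_vec n"
    using A B cols_dim by (metis carrier_matD(1))+
  have incl: "span (set (cols A)) \<subseteq> span (set (cols B))" using span_subsetI[OF cB sub] .
  have sB: "subspace class_ring (span (set (cols B))) V" and sA: "subspace class_ring (span (set (cols A))) V"
    using span_is_subspace cA cB by auto
  have "subspace class_ring (span (set (cols A))) (vs (span (set (cols B))))"
    using nested_subspaces[OF sB sA incl] .
  moreover have "vectorspace.fin_dim class_ring (vs (span (set (cols B))))"
    and "vectorspace.fin_dim class_ring (span_vs (set (cols A)))"
    using fin_dim_span_cols A B by blast+
  ultimately show ?thesis unfolding rank_def
    using vectorspace.subspace_dim[OF subspace_is_vs[OF sB]] by auto
qed

lemma cols_mult_subset_span: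
  assumes Z: "Z \<in> carrier_mat n k" and W: "W \<in> carrier_mat k a"
  shows "set (cols (Z * W)) \<subseteq> span (set (cols Z))"
proof
  fix c assume "c \<in> set (cols (Z * W))"
  then obtain j where j: "j < a" "c = col (Z * W) j" using Z W
    by (metis cols_length cols_nth in_set_conv_nth carrier_matD(2) index_mult_mat(3))
  have "c = Z *\<^sub>v col W j" using j col_mult2[OF Z W j(1)] by simp
  moreover have "col W j \<in> carrier_vec (dim_col Z)" using Z W j by auto
  ultimately have "c \<in> col_space Z" unfolding col_space_eq[OF Z] using Z by auto
  thus "c \<in> span (set (cols Z))" unfolding col_space_def .
qed

lemma rank_mult_le_inner_dim:
  assumes "Z \<in> carrier_mat n k" and "W \<in> carrier_mat k a"
  shows "rank (Z * W) \<le> k"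
proof -
  have "rank (Z * W) \<le> rank Z"
    using rank_le_if_cols_subset_span cols_mult_subset_span assms by (metis mult_carrier_mat)
  also have "\<dots> \<le> k" using rank_le_nc assms(1) .
  finally show ?thesis .
qed

lemma in_span_if_rank_append_col_le:
  assumes A: "A \<in> carrier_mat n a" and x: "x \<in> carrier_vec n"
    and r: "rank (mat_of_cols n (cols A @ [x])) \<le> rank A"
  shows "x \<in> span (set (cols A))"
proof (rule ccontr)
  assume nx: "x \<notin> span (set (cols A))"
  have cA: "set (cols A) \<subseteq> carrier_vec n" using A cols_dim by (metis carrier_matD(1))
  obtain S where S: "maximal S (\<lambda>T. T \<subseteq> set (cols A) \<and> lin_indpt T)" "finite S"
    using maximal_exists_superset[of "set (cols A)" "\<lambda>T. T \<subseteq> set (cols A) \<and> lin_indpt T" "{}"]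
    by (auto simp: lin_dep_def)
  have SA: "S \<subseteq> set (cols A)" "lin_indpt S" using S(1) unfolding maximal_def by auto
  have xS: "x \<notin> S" using nx SA(1) span_mem cA by blast
  have "x \<notin> span S" using nx span_is_monotone[OF SA(1)] by blast
  hence indpt: "lin_indpt (insert x S)"
    using lin_dep_iff_in_span[OF _ SA(2) x xS] SA(1) cA by auto
  define M where "M = mat_of_cols n (cols A @ [x])"
  have M: "M \<in> carrier_mat n (length (cols A @ [x]))" unfolding M_def by (rule mat_of_cols_carrier(1))
  have "cols M = cols A @ [x]" unfolding M_def using cA x by (intro cols_mat_of_cols) auto
  hence "card (insert x S) \<le> rank M" using rank_ge_card_indpt[OF M _ indpt] SA(1) by auto
  moreover have "card (insert x S) = rank A + 1"
    using xS S(2) rank_card_indpt[OF A S(1)] by simp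
  ultimately show False using r unfolding M_def by simp
qed

lemma rank_append_cols_in_span:
  assumes A: "A \<in> carrier_mat n a" and xs: "set xs \<subseteq> span (set (cols A))"
  shows "rank (mat_of_cols n (cols A @ xs)) = rank A"
proof -
  define C where "C = mat_of_cols n (cols A @ xs)"
  have cA: "set (cols A) \<subseteq> carrier_vec n" using A cols_dim by (metis carrier_matD(1))
  have C: "C \<in> carrier_mat n (length (cols A @ xs))" unfolding C_def by (rule mat_of_cols_carrier(1))
  have "set xs \<subseteq> carrier_vec n" using xs span_closed[OF cA] by blast
  hence cC: "cols C = cols A @ xs" unfolding C_def using cA by (intro cols_mat_of_cols) auto
  have "set (cols C) \<subseteq> span (set (cols A))" using cC xs span_mem[OF cA] by auto
  moreover have "set (cols A) \<subseteq> span (set (cols C))"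
    using cC in_own_span C cols_dim by (metis Un_subset_iff carrier_matD(1) set_append)
  ultimately show ?thesis unfolding C_def[symmetric]
    using rank_le_if_cols_subset_span[OF C A] rank_le_if_cols_subset_span[OF A C] by simp
qed

end

lemma binary_mat_one_mat: "binary_mat (1\<^sub>m k)"
  unfolding binary_mat_def by auto

lemma binary_mat_append_columns:
  assumes "binary_mat A" and "\<forall>x \<in> set xs. dim_vec x = dim_row A \<and> binary_vec x"
  shows "binary_mat (append_columns A xs)"
  unfolding binary_mat_def append_columns_def
proof (intro allI impI)
  fix i j assume "i < dim_row (mat_of_cols (dim_row A) (cols A @ xs))"
    "j < dim_col (mat_of_cols (dim_row A) (cols A @ xs))"
  hence ij: "i < dim_row A" "j < dim_col A + length xs" by auto
  show "mat_of_cols (dim_row A) (cols A @ xs) $$ (i, j) \<in> {0, 1}"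
  proof (cases "j < dim_col A")
    case True
    thus ?thesis using assms(1) ij by (simp add: mat_of_cols_def nth_append binary_mat_def)
  next
    case False
    hence "xs ! (j - dim_col A) \<in> set xs" using ij by auto
    thus ?thesis using assms(2) ij False
      by (simp add: mat_of_cols_def nth_append binary_vec_def)
  qed
qed

lemma binary_rank_factorization:
  assumes "binary_mat M"
  obtains U V where "U \<in> carrier_mat (dim_row M) (binary_rank M)"
    and "V \<in> carrier_mat (binary_rank M) (dim_col M)"
    and "binary_mat U" and "binary_mat V" and "M = U * V"
proof -
  have "\<exists>k U V. U \<in> carrier_mat (dim_row M) k \<and> V \<in> carrier_mat k (dim_col M) \<and>
      binary_mat U \<and> binary_mat V \<and> M = U * V"
    using assms binary_mat_one_mat by (intro exI[of _ "dim_col M"] exI[of _ M] exI[of _ "1\<^sub>m (dim_col M)"]) auto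
  from LeastI_ex[OF this] show ?thesis using that unfolding binary_rank_def by blast
qed

lemma real_rank_le_binary_rank:
  assumes "binary_mat M"
  shows "real_rank M \<le> binary_rank M"
proof -
  obtain U V where "U \<in> carrier_mat (dim_row M) (binary_rank M)"
    "V \<in> carrier_mat (binary_rank M) (dim_col M)" "M = U * V"
    using binary_rank_factorization[OF assms] .
  thus ?thesis unfolding real_rank_def using vec_space.rank_mult_le_inner_dim by metis
qed

theorem mainTheorem19:
  fixes A :: "real mat" and n m :: nat and xs :: "real vec list"
  assumes "A \<in> carrier_mat n m"
    and "binary_mat A"
    and "real_rank A = binary_rank A"
    and "\<forall>x \<in> set xs. x \<in> carrier_vec n \<and> binary_vec x"
    and "\<forall>x \<in> set xs. binary_rank (append_columns A [x]) = binary_rank A"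
  shows "real_rank (append_columns A xs) = real_rank A"
proof -
  interpret vec_space "TYPE(real)" n .
  have rank_A: "real_rank A = rank A" unfolding real_rank_def using assms(1) by simp
  have "x \<in> span (set (cols A))" if x: "x \<in> set xs" for x
  proof (rule in_span_if_rank_append_col_le[OF assms(1)])
    show "x \<in> carrier_vec n" using assms(4) x by auto
    have "binary_mat (append_columns A [x])"
      using binary_mat_append_columns assms(1,2,4) x by auto
    hence "real_rank (append_columns A [x]) \<le> real_rank A"
      using real_rank_le_binary_rank assms(3,5) x by metis
    thus "rank (mat_of_cols n (cols A @ [x])) \<le> rank A"
      using assms(1) rank_A unfolding real_rank_def append_columns_def by simp
  qed
  hence "rank (mat_of_cols n (cols A @ xs)) = rank A"
    using rank_append_cols_in_span[OF assms(1)] by blast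
  thus ?thesis using assms(1) rank_A unfolding real_rank_def append_columns_def by simp
qed

end
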